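(* Let $\Sigma=(X,U,F)$ be a system and $Q\subset X$. If $(\mathcal{A},G)$ is a quasi-invariant-partition of $Q$, then \[\log\rho(W_{\mathcal{A},G})-\log\rho(M_{\mathcal{A},G})\le h_{inv}(\mathcal{A},G)\le\min\{\log\|W_{\mathcal{A},G}\|_\infty,\ \log\rho(W_{\mathcal{A},G})\},\] where $\rho(\cdot)$ denotes the spectral radius. In particular, if $\rho(M_{\mathcal{A},G})=1$, then $h_{inv}(\mathcal{A},G)=\log\rho(W_{\mathcal{A},G})$.
   Context: A system is a triple $\Sigma=(X,U,F)$ where $X,U$ are nonempty sets and $F:X\times U\rightrightarrows X$ is a set-valued map with $F(x,u)\neq\emptyset$ for all $(x,u)$; for $A\subset X$, $F(A,u)=\bigcup_{x\in A}F(x,u)$. An invariant cover of $Q$ is a pair $(\mathcal{A},G)$ where $\mathcal{A}$ is a finite cover of $Q$ (by subsets of $Q$) and $G:\mathcal{A}\to U$ satisfies $F(A,G(A))\subset Q$ for all $A\in\mathcal{A}$. For $\mathcal{S}\subset\mathcal{A}^n$, $\alpha=\alpha(0)\cdots\alpha(n-1)\in\mathcal{S}$ and integer $0\le t<n-1$, let $P(\alpha|_{[0,t]})=\{A\in\mathcal{A}:\exists\hat\alpha\in\mathcal{S},\ \hat\alpha|_{[0,t]}=\alpha|_{[0,t]},\ A=\hat\alpha(t+1)\}$, and $P(\alpha|_{[0,n-1]})=P(\alpha)=\{\hat\alpha(0):\hat\alpha\in\mathcal{S}\}$. $\mathcal{S}$ is $(n,Q)$-spanning in $(\mathcal{A},G)$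 if (1) the elements of $P(\alpha)$ cover $Q$, and (2) for every $\alpha\in\mathcal{S}$ and $0\le t<n-1$, $F(\alpha(t),G(\alpha(t)))\subset\bigcup_{A'\in P(\alpha|_{[0,t]})}A'$. Let $N(\mathcal{S})=\max_{\alpha\in\mathcal{S}}\prod_{t=0}^{n-1}\sharp P(\alpha|_{[0,t]})$, $r_{inv}(n,Q,\mathcal{A},G)=\min\{N(\mathcal{S}):\mathcal{S}\ (n,Q)\text{-spanning in }(\mathcal{A},G)\}$, and $h_{inv}(\mathcal{A},G)=\lim_{n\to\infty}\frac1n\log r_{inv}(n,Q,\mathcal{A},G)$ ($\log$ base $2$). For $A\in\mathcal{A}$: $D(A)=\{A'\in\mathcal{A}:F(A,G(A))\cap A'\neq\emptyset\}$. An invariant cover $(\mathcal{A},G)$ is a quasi-invariant-partition of $Q$ if $A\setminus\bigcup_{B\in\mathcal{A},B\neq A}B\neq\emptyset$ for all $A\in\mathcal{A}$, and $F(A,G(A))\cap\big(B\setminus\bigcup_{C\in D(A),C\neq B}C\big)\neq\emptyset$ for all $A\in\mathcal{A}$ and $B\in D(A)$. The adjacency matrix $M_{\mathcal{A},G}=(M_{AB})_{A,B\in\mathcal{A}}$ has $M_{AB}=1$ if $F(A,G(A))\cap B\neq\emptyset$ and $0$ otherwise; the weighted adjacency matrix $W_{\mathcal{A},G}=(W_{AB})_{A,B\in\mathcal{A}}$ has $W_{AB}=\sharp D(A)$ if $F(A,G(A))\cap B\neq\emptyset$ and $0$ otherwise. For a square matrix $M=(a_{ij})$, $\|M\|_\infty=\max_{i,j}|a_{ij}|$.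 *)

theory Defs
  imports "HOL-Analysis.Analysis"
begin

text \<open>A system (X,U,F) is modelled with X = UNIV :: 'x set, U = UNIV :: 'u set,
  F :: 'x \<Rightarrow> 'u \<Rightarrow> 'x set.\<close>

definition Fset :: "('x \<Rightarrow> 'u \<Rightarrow> 'x set) \<Rightarrow> 'x set \<Rightarrow> 'u \<Rightarrow> 'x set" where
  "Fset F A u = (\<Union>x\<in>A. F x u)"

definition invariant_cover ::
  "('x \<Rightarrow> 'u \<Rightarrow> 'x set) \<Rightarrow> 'x set \<Rightarrow> 'x set set \<Rightarrow> ('x set \<Rightarrow> 'u) \<Rightarrow> bool" where
  "invariant_cover F Q \<A> G \<longleftrightarrow>
     finite \<A> \<and> (\<forall>A\<in>\<A>. A \<subseteq> Q) \<and> Q \<subseteq> \<Union>\<A> \<and>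
     (\<forall>A\<in>\<A>. Fset F A (G A) \<subseteq> Q)"

text \<open>P(alpha|[0,t]) for S a set of words of length n over the cover (words = lists).\<close>
definition Pset :: "'a list set \<Rightarrow> nat \<Rightarrow> 'a list \<Rightarrow> nat \<Rightarrow> 'a set" where
  "Pset S n \<alpha> t =
     (if t < n - 1
      then {\<beta> ! (t+1) | \<beta>. \<beta> \<in> S \<and> take (t+1) \<beta> = take (t+1) \<alpha>}
      else {\<beta> ! 0 | \<beta>. \<beta> \<in> S})"

definition spanning ::
  "('x \<Rightarrow> 'u \<Rightarrow> 'x set) \<Rightarrow> 'x set \<Rightarrow> 'x set set \<Rightarrow> ('x set \<Rightarrow> 'u)
     \<Rightarrow> nat \<Rightarrow> 'x set list set \<Rightarrow> bool" where
  "spanning F Q \<A> G n S \<longleftrightarrow>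
     S \<subseteq> {\<alpha>. length \<alpha> = n \<and> set \<alpha> \<subseteq> \<A>} \<and>
     Q \<subseteq> \<Union>{\<beta> ! 0 | \<beta>. \<beta> \<in> S} \<and>
     (\<forall>\<alpha>\<in>S. \<forall>t. t < n - 1 \<longrightarrow>
        Fset F (\<alpha> ! t) (G (\<alpha> ! t)) \<subseteq> \<Union>(Pset S n \<alpha> t))"

definition Nval :: "'a list set \<Rightarrow> nat \<Rightarrow> nat" where
  "Nval S n = Max {(\<Prod>t<n. card (Pset S n \<alpha> t)) | \<alpha>. \<alpha> \<in> S}"

definition r_inv ::
  "('x \<Rightarrow> 'u \<Rightarrow> 'x set) \<Rightarrow> 'x set \<Rightarrow> 'x set set \<Rightarrow> ('x set \<Rightarrow> 'u) \<Rightarrow> nat \<Rightarrow> nat" where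
  "r_inv F Q \<A> G n = Min {Nval S n | S. spanning F Q \<A> G n S}"

definition h_inv_seq ::
  "('x \<Rightarrow> 'u \<Rightarrow> 'x set) \<Rightarrow> 'x set \<Rightarrow> 'x set set \<Rightarrow> ('x set \<Rightarrow> 'u) \<Rightarrow> nat \<Rightarrow> real" where
  "h_inv_seq F Q \<A> G n = log 2 (real (r_inv F Q \<A> G n)) / real n"

definition h_inv ::
  "('x \<Rightarrow> 'u \<Rightarrow> 'x set) \<Rightarrow> 'x set \<Rightarrow> 'x set set \<Rightarrow> ('x set \<Rightarrow> 'u) \<Rightarrow> real" where
  "h_inv F Q \<A> G = lim (h_inv_seq F Q \<A> G)"

definition Dset ::
  "('x \<Rightarrow> 'u \<Rightarrow> 'x set) \<Rightarrow> 'x set set \<Rightarrow> ('x set \<Rightarrow> 'u) \<Rightarrow> 'x set \<Rightarrow> 'x set set" where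
  "Dset F \<A> G A = {A'\<in>\<A>. Fset F A (G A) \<inter> A' \<noteq> {}}"

definition quasi_invariant_partition ::
  "('x \<Rightarrow> 'u \<Rightarrow> 'x set) \<Rightarrow> 'x set \<Rightarrow> 'x set set \<Rightarrow> ('x set \<Rightarrow> 'u) \<Rightarrow> bool" where
  "quasi_invariant_partition F Q \<A> G \<longleftrightarrow>
     invariant_cover F Q \<A> G \<and>
     (\<forall>A\<in>\<A>. A - \<Union>{B\<in>\<A>. B \<noteq> A} \<noteq> {}) \<and>
     (\<forall>A\<in>\<A>. \<forall>B\<in>Dset F \<A> G A.
        Fset F A (G A) \<inter> (B - \<Union>{C\<in>Dset F \<A> G A. C \<noteq> B}) \<noteq> {})"

definition adj_matrix ::
  "('x \<Rightarrow> 'u \<Rightarrow> 'x set) \<Rightarrow> ('x set \<Rightarrow> 'u) \<Rightarrow> 'x set \<Rightarrow> 'x set \<Rightarrow> real" where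
  "adj_matrix F G A B = (if Fset F A (G A) \<inter> B \<noteq> {} then 1 else 0)"

definition wadj_matrix ::
  "('x \<Rightarrow> 'u \<Rightarrow> 'x set) \<Rightarrow> 'x set set \<Rightarrow> ('x set \<Rightarrow> 'u) \<Rightarrow> 'x set \<Rightarrow> 'x set \<Rightarrow> real" where
  "wadj_matrix F \<A> G A B =
     (if Fset F A (G A) \<inter> B \<noteq> {} then real (card (Dset F \<A> G A)) else 0)"

definition is_eigenvalue :: "'i set \<Rightarrow> ('i \<Rightarrow> 'i \<Rightarrow> real) \<Rightarrow> complex \<Rightarrow> bool" where
  "is_eigenvalue I M c \<longleftrightarrow>
     (\<exists>v :: 'i \<Rightarrow> complex. (\<exists>i\<in>I. v i \<noteq> 0) \<and>
        (\<forall>i\<in>I. (\<Sum>j\<in>I. complex_of_real (M i j) * v j) = c * v i))"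

definition spectral_radius :: "'i set \<Rightarrow> ('i \<Rightarrow> 'i \<Rightarrow> real) \<Rightarrow> real" where
  "spectral_radius I M = Max {cmod c | c. is_eigenvalue I M c}"

definition max_norm :: "'i set \<Rightarrow> ('i \<Rightarrow> 'i \<Rightarrow> real) \<Rightarrow> real" where
  "max_norm I M = Max {\<bar>M i j\<bar> | i j. i \<in> I \<and> j \<in> I}"

end

theory Submission
  imports Defs "Jordan_Normal_Form.Jordan_Normal_Form_Existence" "HOL-Real_Asymp.Real_Asymp"
begin

text \<open>
  Call a word \<open>\<alpha> = \<alpha>(0) \<dots> \<alpha>(n - 1)\<close> over the cover a walk if \<open>\<alpha>(t + 1) \<in> D(\<alpha>(t))\<close> for
  all \<open>t\<close>. The walks of length \<open>n\<close> form an \<open>(n, Q)\<close>-spanning set whose sets \<open>P(\<alpha>|[0,t])\<close> are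
  exactly the \<open>D(\<alpha>(t))\<close>, and in a quasi-invariant partition every \<open>(n, Q)\<close>-spanning set
  contains all walks: each \<open>A \<in> \<A>\<close> has a point lying in no other element of the cover, and
  each \<open>B \<in> D(A)\<close> contains a point of \<open>F(A, G(A))\<close> lying in no other element of \<open>D(A)\<close>.
  Hence \<open>r_inv(n) = #\<A> \<cdot> p(n - 1)\<close>, where \<open>p(k)\<close> is the largest weight \<open>\<Prod>t<k. #D(\<alpha>(t))\<close>
  of a walk of length \<open>k + 1\<close>. As \<open>p\<close> is submultiplicative, Fekete's lemma gives
  \<open>h_inv = lim log p(k) / k = inf log p(k) / k\<close>.

  The row sums of \<open>W\<^sup>k\<close> dominate \<open>p(k)\<close> and are dominated by \<open>p(k)\<close> times the row sums of
  \<open>M\<^sup>k\<close>. An eigenvector for an eigenvalue of modulus \<open>\<rho>\<close> bounds some row sum of the \<open>k\<close>-th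
  power from below by \<open>\<rho>\<^sup>k\<close>, and the Jordan normal form bounds all entries from above by
  \<open>\<rho>\<^sup>k\<close> times a polynomial in \<open>k\<close>, which disappears when taking \<open>k\<close>-th roots. This gives
  \<open>log \<rho>(W) - log \<rho>(M) \<le> h_inv \<le> log \<rho>(W)\<close>, and \<open>h_inv \<le> log p(1) \<le> log \<parallel>W\<parallel>\<^sub>\<infinity>\<close>.
\<close>

section \<open>Matrices indexed by a finite set\<close>

primrec mat_pow_on :: "'i set \<Rightarrow> ('i \<Rightarrow> 'i \<Rightarrow> real) \<Rightarrow> nat \<Rightarrow> 'i \<Rightarrow> 'i \<Rightarrow> real" where
  "mat_pow_on I M 0 = (\<lambda>i j. if i = j then 1 else 0)"
| "mat_pow_on I M (Suc k) = (\<lambda>i j. \<Sum>l\<in>I. mat_pow_on I M k i l * M l j)"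

lemma mat_pow_on_Suc_left:
  assumes I: "finite I" and "i \<in> I" and "j \<in> I"
  shows "mat_pow_on I M (Suc k) i j = (\<Sum>l\<in>I. M i l * mat_pow_on I M k l j)"
  using assms(2,3)
proof (induction k arbitrary: i j)
  case 0
  then show ?case by (simp add: I if_distrib if_distribR cong: if_cong)
next
  case (Suc k)
  have "mat_pow_on I M (Suc (Suc k)) i j = (\<Sum>l\<in>I. mat_pow_on I M (Suc k) i l * M l j)"
    by simp
  also have "\<dots> = (\<Sum>l\<in>I. (\<Sum>m\<in>I. M i m * mat_pow_on I M k m l) * M l j)"
    using Suc by (intro sum.cong) auto
  also have "\<dots> = (\<Sum>m\<in>I. M i m * mat_pow_on I M (Suc k) m j)"
    by (simp add: sum_distrib_left sum_distrib_right mult.assoc) (rule sum.swap)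
  finally show ?case .
qed

lemma row_sum_mat_pow_on_Suc:
  assumes "finite I" and "i \<in> I"
  shows "(\<Sum>j\<in>I. mat_pow_on I M (Suc k) i j) = (\<Sum>l\<in>I. M i l * (\<Sum>j\<in>I. mat_pow_on I M k l j))"
proof -
  have "(\<Sum>j\<in>I. mat_pow_on I M (Suc k) i j) = (\<Sum>j\<in>I. \<Sum>l\<in>I. M i l * mat_pow_on I M k l j)"
    using assms by (intro sum.cong) (simp_all only: mat_pow_on_Suc_left)
  also have "\<dots> = (\<Sum>l\<in>I. M i l * (\<Sum>j\<in>I. mat_pow_on I M k l j))"
    by (subst sum.swap) (simp add: sum_distrib_left)
  finally show ?thesis .
qed

lemma row_sum_le_entry_sum:
  assumes "finite I" and "i \<in> I"
  shows "(\<Sum>j\<in>I. A i j) \<le> (\<Sum>i\<in>I. \<Sum>j\<in>I. \<bar>A i j\<bar> :: real)"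
proof -
  have "(\<Sum>j\<in>I. A i j) \<le> (\<Sum>j\<in>I. \<bar>A i j\<bar>)" by (intro sum_mono) simp
  also have "\<dots> \<le> (\<Sum>i\<in>I. \<Sum>j\<in>I. \<bar>A i j\<bar>)"
    using assms by (intro member_le_sum) (simp_all add: sum_nonneg)
  finally show ?thesis .
qed

lemma mat_pow_on_nonneg:
  assumes "\<And>i j. i \<in> I \<Longrightarrow> j \<in> I \<Longrightarrow> 0 \<le> M i j" and "i \<in> I" and "j \<in> I"
  shows "0 \<le> mat_pow_on I M k i j"
  using assms(3) by (induction k arbitrary: j) (auto intro!: sum_nonneg simp: assms(1,2))

lemma mat_pow_on_divide:
  "mat_pow_on I (\<lambda>i j. M i j / r) k i j = mat_pow_on I M k i j / r ^ k"
  by (induction k arbitrary: j) (simp_all add: sum_divide_distrib mult.commute)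

lemma mat_pow_on_eigenvector:
  assumes I: "finite I" and u: "\<And>i. i \<in> I \<Longrightarrow> (\<Sum>j\<in>I. complex_of_real (M i j) * u j) = c * u i"
    and "i \<in> I"
  shows "(\<Sum>j\<in>I. complex_of_real (mat_pow_on I M k i j) * u j) = c ^ k * u i"
  using assms(3)
proof (induction k arbitrary: i)
  case 0
  then show ?case by (simp add: I if_distrib if_distribR cong: if_cong)
next
  case (Suc k)
  have "(\<Sum>j\<in>I. complex_of_real (mat_pow_on I M (Suc k) i j) * u j)
      = (\<Sum>l\<in>I. complex_of_real (mat_pow_on I M k i l) * (\<Sum>j\<in>I. complex_of_real (M l j) * u j))"
    by (simp add: sum_distrib_left sum_distrib_right mult.assoc) (rule sum.swap)
  also have "\<dots> = c * (\<Sum>l\<in>I. complex_of_real (mat_pow_on I M k i l) * u l)"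
    by (simp add: u sum_distrib_left mult.left_commute)
  finally show ?case using Suc by simp
qed

definition mat_of_enum :: "nat \<Rightarrow> (nat \<Rightarrow> 'i) \<Rightarrow> ('i \<Rightarrow> 'i \<Rightarrow> real) \<Rightarrow> complex mat" where
  "mat_of_enum N e M = mat N N (\<lambda>(i, j). complex_of_real (M (e i) (e j)))"

lemma mat_of_enum_carrier: "mat_of_enum N e M \<in> carrier_mat N N"
  by (simp add: mat_of_enum_def)

lemma mat_of_enum_pow:
  fixes M :: "'i \<Rightarrow> 'i \<Rightarrow> real"
  assumes e: "bij_betw e {0..<N} I"
  shows "mat_of_enum N e M ^\<^sub>m k = mat_of_enum N e (mat_pow_on I M k)"
proof (induction k)
  case 0
  have "inj_on e {0..<N}" using e by (rule bij_betw_imp_inj_on)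
  then show ?case by (intro eq_matI) (auto simp: mat_of_enum_def inj_on_eq_iff)
next
  case (Suc k)
  have sum_I: "sum f I = (\<Sum>l = 0..<N. f (e l))" for f :: "'i \<Rightarrow> real"
    using sum.reindex_bij_betw[OF e, of f] by simp
  have "mat_of_enum N e M ^\<^sub>m Suc k = mat_of_enum N e (mat_pow_on I M k) * mat_of_enum N e M"
    by (simp add: Suc)
  also have "\<dots> = mat_of_enum N e (mat_pow_on I M (Suc k))"
    by (intro eq_matI) (simp_all add: mat_of_enum_def scalar_prod_def sum_I flip: of_real_sum of_real_mult)
  finally show ?case .
qed

lemma is_eigenvalue_iff_eigenvalue_mat_of_enum:
  fixes M :: "'i \<Rightarrow> 'i \<Rightarrow> real"
  assumes e: "bij_betw e {0..<N} I"
  shows "is_eigenvalue I M c \<longleftrightarrow> eigenvalue (mat_of_enum N e M) c"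
proof -
  have sum_I: "sum f I = (\<Sum>l = 0..<N. f (e l))" for f :: "'i \<Rightarrow> complex"
    using sum.reindex_bij_betw[OF e, of f] by simp
  have ball_I: "(\<forall>x\<in>I. P x) \<longleftrightarrow> (\<forall>i<N. P (e i))"
    and bex_I: "(\<exists>x\<in>I. P x) \<longleftrightarrow> (\<exists>i<N. P (e i))" for P
    using e by (auto simp: bij_betw_def)
  have eigen_eq: "(mat_of_enum N e M *\<^sub>v vec N (u \<circ> e) = c \<cdot>\<^sub>v vec N (u \<circ> e))
      \<longleftrightarrow> (\<forall>x\<in>I. (\<Sum>j\<in>I. complex_of_real (M x j) * u j) = c * u x)" for u :: "'i \<Rightarrow> complex"
    by (simp add: ball_I vec_eq_iff mat_of_enum_def scalar_prod_def sum_I)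
  have nonzero_eq: "vec N (u \<circ> e) \<noteq> 0\<^sub>v N \<longleftrightarrow> (\<exists>x\<in>I. u x \<noteq> 0)" for u :: "'i \<Rightarrow> complex"
    by (auto simp: vec_eq_iff bex_I)
  have vec_of_fun: "v = vec N ((\<lambda>x. vec_index v (inv_into {0..<N} e x)) \<circ> e)"
    if "v \<in> carrier_vec N" for v :: "complex vec"
    using that e by (auto simp: vec_eq_iff bij_betw_inv_into_left)
  have "is_eigenvalue I M c \<longleftrightarrow> (\<exists>u. vec N (u \<circ> e) \<noteq> 0\<^sub>v N
      \<and> mat_of_enum N e M *\<^sub>v vec N (u \<circ> e) = c \<cdot>\<^sub>v vec N (u \<circ> e))"
    unfolding is_eigenvalue_def eigen_eq nonzero_eq ..
  also have "\<dots> \<longleftrightarrow> eigenvalue (mat_of_enum N e M) c"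
    unfolding eigenvalue_def eigenvector_def mat_of_enum_def
    by (metis (no_types, lifting) vec_of_fun dim_row_mat(1) vec_carrier)
  finally show ?thesis .
qed

lemma eigenvalues_finite:
  fixes M :: "'i \<Rightarrow> 'i \<Rightarrow> real"
  assumes "finite I"
  shows "finite {c. is_eigenvalue I M c}"
proof -
  obtain e where e: "bij_betw e {0..<card I} I" using ex_bij_betw_nat_finite[OF assms] by blast
  let ?A = "mat_of_enum (card I) e M"
  have A: "?A \<in> carrier_mat (card I) (card I)" by (rule mat_of_enum_carrier)
  have "coeff (char_poly ?A) (card I) = 1" using degree_monic_char_poly[OF A] by simp
  then have "char_poly ?A \<noteq> 0" by auto
  moreover have "{c. is_eigenvalue I M c} = {c. poly (char_poly ?A) c = 0}"
    using is_eigenvalue_iff_eigenvalue_mat_of_enum[OF e] eigenvalue_root_char_poly[OF A] by auto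
  ultimately show ?thesis by (simp add: poly_roots_finite)
qed

lemma eigenvalue_exists:
  fixes M :: "'i \<Rightarrow> 'i \<Rightarrow> real"
  assumes "finite I" and "I \<noteq> {}"
  shows "\<exists>c. is_eigenvalue I M c"
proof -
  obtain e where e: "bij_betw e {0..<card I} I" using ex_bij_betw_nat_finite[OF assms(1)] by blast
  let ?A = "mat_of_enum (card I) e M"
  have A: "?A \<in> carrier_mat (card I) (card I)" by (rule mat_of_enum_carrier)
  have "degree (char_poly ?A) = card I" using degree_monic_char_poly[OF A] by simp
  then have "\<not> constant (poly (char_poly ?A))"
    using assms by (simp add: constant_degree card_gt_0_iff)
  then obtain c where "poly (char_poly ?A) c = 0" using fundamental_theorem_of_algebra by blast
  then show ?thesis
    using is_eigenvalue_iff_eigenvalue_mat_of_enum[OF e] eigenvalue_root_char_poly[OF A] by blast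
qed

lemma eigenvalue_norm_le_spectral_radius:
  assumes "finite I" and "is_eigenvalue I M c"
  shows "cmod c \<le> spectral_radius I M"
  unfolding spectral_radius_def using assms eigenvalues_finite[OF assms(1), of M]
  by (intro Max_ge) auto

lemma spectral_radius_attained:
  fixes M :: "'i \<Rightarrow> 'i \<Rightarrow> real"
  assumes "finite I" and "I \<noteq> {}"
  shows "\<exists>c. is_eigenvalue I M c \<and> cmod c = spectral_radius I M"
proof -
  have "finite (cmod ` {c. is_eigenvalue I M c})" and "cmod ` {c. is_eigenvalue I M c} \<noteq> {}"
    using eigenvalues_finite[OF assms(1)] eigenvalue_exists[OF assms] by auto
  then have "Max (cmod ` {c. is_eigenvalue I M c}) \<in> cmod ` {c. is_eigenvalue I M c}"
    by (rule Max_in)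
  moreover have "{cmod c | c. is_eigenvalue I M c} = cmod ` {c. is_eigenvalue I M c}" by auto
  ultimately show ?thesis unfolding spectral_radius_def by auto
qed

lemma spectral_radius_nonneg:
  fixes M :: "'i \<Rightarrow> 'i \<Rightarrow> real"
  assumes "finite I" and "I \<noteq> {}"
  shows "0 \<le> spectral_radius I M"
  using spectral_radius_attained[OF assms, of M] by (metis norm_ge_zero)

lemma is_eigenvalue_divide:
  assumes "r \<noteq> 0" and "is_eigenvalue I (\<lambda>i j. M i j / r) c"
  shows "is_eigenvalue I M (complex_of_real r * c)"
proof -
  obtain u where "\<exists>i\<in>I. u i \<noteq> 0"
    and u: "\<And>i. i \<in> I \<Longrightarrow> (\<Sum>j\<in>I. complex_of_real (M i j / r) * u j) = c * u i"
    using assms(2) unfolding is_eigenvalue_def by blast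
  moreover have "(\<Sum>j\<in>I. complex_of_real (M i j) * u j) = complex_of_real r * c * u i" if "i \<in> I" for i
  proof -
    have "(\<Sum>j\<in>I. complex_of_real (M i j) * u j)
        = complex_of_real r * (\<Sum>j\<in>I. complex_of_real (M i j / r) * u j)"
      using assms(1) by (simp add: sum_distrib_left)
    then show ?thesis using u[OF that] by (simp add: mult.assoc)
  qed
  ultimately show ?thesis unfolding is_eigenvalue_def by blast
qed

lemma const_add_mult_pow_le:
  fixes c1 c2 :: real
  shows "c1 + c2 * real k ^ d \<le> (\<bar>c1\<bar> + \<bar>c2\<bar>) * (real k + 1) ^ d"
proof -
  have "\<bar>c1\<bar> * 1 \<le> \<bar>c1\<bar> * (real k + 1) ^ d"
    by (intro mult_left_mono) simp_all
  moreover have "c2 * real k ^ d \<le> \<bar>c2\<bar> * real k ^ d"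
    by (intro mult_right_mono) simp_all
  moreover have "\<bar>c2\<bar> * real k ^ d \<le> \<bar>c2\<bar> * (real k + 1) ^ d"
    by (intro mult_left_mono power_mono) simp_all
  ultimately show ?thesis unfolding distrib_right by linarith
qed

lemma mat_pow_on_entry_le:
  fixes M :: "'i \<Rightarrow> 'i \<Rightarrow> real"
  assumes I: "finite I" and r: "0 < r" and ev: "\<And>c. is_eigenvalue I M c \<Longrightarrow> cmod c \<le> r"
  obtains B where "\<And>k i j. i \<in> I \<Longrightarrow> j \<in> I
    \<Longrightarrow> \<bar>mat_pow_on I M k i j\<bar> \<le> B * (real k + 1) ^ (card I - 1) * r ^ k"
proof -
  obtain e where e: "bij_betw e {0..<card I} I" using ex_bij_betw_nat_finite[OF I] by blast
  define N where "N = card I"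
  define A where "A = mat_of_enum N e (\<lambda>i j. M i j / r)"
  have A: "A \<in> carrier_mat N N" unfolding A_def by (rule mat_of_enum_carrier)
  have ev_A: "cmod c \<le> 1" if "eigenvalue A c" for c
  proof -
    have "is_eigenvalue I (\<lambda>i j. M i j / r) c"
      using that is_eigenvalue_iff_eigenvalue_mat_of_enum[OF e] unfolding A_def N_def by blast
    then have "is_eigenvalue I M (complex_of_real r * c)"
      using r by (intro is_eigenvalue_divide[of r]) simp_all
    then have "cmod (complex_of_real r * c) \<le> r" by (rule ev)
    then have "r * cmod c \<le> r * 1" using r by (simp add: norm_mult abs_of_pos)
    then show ?thesis using r by simp
  qed
  obtain as where cA: "char_poly A = (\<Prod>a\<leftarrow>as. [:- a, 1:])" and len: "length as = N"
    using char_poly_factorized[OF A] by blast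
  \<comment> \<open>the eigenvalues of \<open>M / r\<close> lie in the closed unit disc, so its powers grow polynomially\<close>
  obtain c1 c2 where bound: "\<And>k. norm_bound (A ^\<^sub>m k) (c1 + c2 * of_nat k ^ (N - 1))"
  proof (rule exE[OF factored_char_poly_norm_bound_cof[OF A cA]])
    fix a assume "a \<in> set as"
    then have "poly (char_poly A) a = 0" unfolding cA by (rule linear_poly_root)
    then show "cmod a \<le> 1" using ev_A eigenvalue_root_char_poly[OF A] by blast
    show "length (filter ((=) a) as) \<le> N" using len by (metis length_filter_le)
  qed blast
  have "\<bar>mat_pow_on I M k i j\<bar> \<le> (\<bar>c1\<bar> + \<bar>c2\<bar>) * (real k + 1) ^ (N - 1) * r ^ k"
    if "i \<in> I" and "j \<in> I" for k i j
  proof -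
    have "i \<in> e ` {0..<N}" and "j \<in> e ` {0..<N}"
      using e that unfolding N_def bij_betw_def by simp_all
    then obtain a b where ab: "a < N" "b < N" "i = e a" "j = e b" by auto
    have "\<bar>mat_pow_on I M k i j\<bar> / r ^ k = cmod ((A ^\<^sub>m k) $$ (a, b))"
      using ab r unfolding A_def N_def mat_of_enum_pow[OF e]
      by (simp add: mat_of_enum_def mat_pow_on_divide norm_divide norm_power abs_of_pos)
    also have "\<dots> \<le> c1 + c2 * real k ^ (N - 1)"
      using bound[of k] ab A unfolding norm_bound_def by auto
    also have "\<dots> \<le> (\<bar>c1\<bar> + \<bar>c2\<bar>) * (real k + 1) ^ (N - 1)"
      by (rule const_add_mult_pow_le)
    finally show ?thesis using r by (simp add: divide_le_eq)
  qed
  then show ?thesis unfolding N_def by (rule that)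
qed

lemma entry_sum_mat_pow_on_le:
  fixes M :: "'i \<Rightarrow> 'i \<Rightarrow> real"
  assumes "finite I" and "0 < r" and "\<And>c. is_eigenvalue I M c \<Longrightarrow> cmod c \<le> r"
  obtains C m where "\<And>k. (\<Sum>i\<in>I. \<Sum>j\<in>I. \<bar>mat_pow_on I M k i j\<bar>) \<le> C * (real k + 1) ^ m * r ^ k"
proof -
  obtain B where B: "\<And>k i j. i \<in> I \<Longrightarrow> j \<in> I
      \<Longrightarrow> \<bar>mat_pow_on I M k i j\<bar> \<le> B * (real k + 1) ^ (card I - 1) * r ^ k"
    using mat_pow_on_entry_le[OF assms] by blast
  have "(\<Sum>i\<in>I. \<Sum>j\<in>I. \<bar>mat_pow_on I M k i j\<bar>)
      \<le> real (card I * card I) * B * (real k + 1) ^ (card I - 1) * r ^ k" for k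
  proof -
    have "(\<Sum>i\<in>I. \<Sum>j\<in>I. \<bar>mat_pow_on I M k i j\<bar>)
        \<le> (\<Sum>i\<in>I. \<Sum>j\<in>I. B * (real k + 1) ^ (card I - 1) * r ^ k)"
      using B by (intro sum_mono) auto
    then show ?thesis by simp
  qed
  then show ?thesis by (rule that)
qed

lemma pow_le_poly_times_pow_imp_le:
  fixes x y C :: real
  assumes "0 < x" and "0 < y" and bound: "\<And>k. x ^ k \<le> C * (real k + 1) ^ m * y ^ k"
  shows "x \<le> y"
proof (rule ccontr)
  assume "\<not> x \<le> y"
  then have "0 < y / x" and "y / x < 1" using assms(1,2) by simp_all
  moreover have "(\<lambda>k. C * (real k + 1) ^ m * q ^ k) \<longlonglongrightarrow> 0" if "0 < q" and "q < 1" for q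
    using that by real_asymp
  ultimately have "(\<lambda>k. C * (real k + 1) ^ m * (y / x) ^ k) \<longlonglongrightarrow> 0" by blast
  moreover have "1 \<le> C * (real k + 1) ^ m * (y / x) ^ k" for k
    using bound[of k] assms(1) by (simp add: field_simps)
  ultimately have "1 \<le> (0::real)" by (intro LIMSEQ_le_const) auto
  then show False by simp
qed

lemma le_spectral_radius_if_pow_le_entry_sum:
  fixes M :: "'i \<Rightarrow> 'i \<Rightarrow> real"
  assumes I: "finite I" "I \<noteq> {}" and "0 < x"
    and growth: "\<And>k. x ^ k \<le> (\<Sum>i\<in>I. \<Sum>j\<in>I. \<bar>mat_pow_on I M k i j\<bar>)"
  shows "x \<le> spectral_radius I M"
proof (rule dense_ge)
  fix r assume r: "spectral_radius I M < r"
  then have "0 < r" using spectral_radius_nonneg[OF I, of M] by linarith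
  have "cmod c \<le> r" if "is_eigenvalue I M c" for c
    using eigenvalue_norm_le_spectral_radius[OF I(1) that] r by linarith
  then obtain C m
    where C: "\<And>k. (\<Sum>i\<in>I. \<Sum>j\<in>I. \<bar>mat_pow_on I M k i j\<bar>) \<le> C * (real k + 1) ^ m * r ^ k"
    using entry_sum_mat_pow_on_le[OF I(1) \<open>0 < r\<close>] by metis
  show "x \<le> r"
    using \<open>0 < x\<close> \<open>0 < r\<close> order.trans[OF growth C] by (rule pow_le_poly_times_pow_imp_le)
qed

lemma spectral_radius_ge_1:
  fixes M :: "'i \<Rightarrow> 'i \<Rightarrow> real"
  assumes I: "finite I" "I \<noteq> {}" and nonneg: "\<And>i j. i \<in> I \<Longrightarrow> j \<in> I \<Longrightarrow> 0 \<le> M i j"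
    and row: "\<And>i. i \<in> I \<Longrightarrow> \<exists>j\<in>I. 1 \<le> M i j"
  shows "1 \<le> spectral_radius I M"
proof (rule le_spectral_radius_if_pow_le_entry_sum[OF I])
  have row_sum: "1 \<le> (\<Sum>j\<in>I. mat_pow_on I M k i j)" if "i \<in> I" for k i
    using that
  proof (induction k arbitrary: i)
    case (Suc k)
    obtain j where j: "j \<in> I" "1 \<le> M i j" using row[OF Suc.prems] by blast
    have row_sum_nonneg: "0 \<le> (\<Sum>j\<in>I. mat_pow_on I M k l j)" if "l \<in> I" for l
      using Suc.IH[OF that] by linarith
    have "1 \<le> M i j * (\<Sum>l\<in>I. mat_pow_on I M k j l)"
      using j(2) Suc.IH[OF j(1)] by (rule mult_ge1_I)
    also have "\<dots> \<le> (\<Sum>l\<in>I. M i l * (\<Sum>j\<in>I. mat_pow_on I M k l j))"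
      using j(1) I(1) row_sum_nonneg nonneg[OF Suc.prems]
      by (intro member_le_sum) (auto intro!: mult_nonneg_nonneg)
    finally show ?case by (simp only: row_sum_mat_pow_on_Suc[OF I(1) Suc.prems])
  qed (simp add: I(1))
  fix k
  obtain i where i: "i \<in> I" using I(2) by blast
  have "1 \<le> (\<Sum>j\<in>I. mat_pow_on I M k i j)" by (rule row_sum[OF i])
  also have "\<dots> \<le> (\<Sum>i\<in>I. \<Sum>j\<in>I. \<bar>mat_pow_on I M k i j\<bar>)"
    by (rule row_sum_le_entry_sum[OF I(1) i])
  finally show "1 ^ k \<le> (\<Sum>i\<in>I. \<Sum>j\<in>I. \<bar>mat_pow_on I M k i j\<bar>)" by simp
qed simp

lemma eigenvalue_pow_le_row_sum:
  assumes I: "finite I" and nonneg: "\<And>i j. i \<in> I \<Longrightarrow> j \<in> I \<Longrightarrow> 0 \<le> M i j"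
    and "is_eigenvalue I M c"
  shows "\<exists>i\<in>I. \<forall>k. cmod c ^ k \<le> (\<Sum>j\<in>I. mat_pow_on I M k i j)"
proof -
  obtain u where "\<exists>i\<in>I. u i \<noteq> 0"
    and u: "\<And>i. i \<in> I \<Longrightarrow> (\<Sum>j\<in>I. complex_of_real (M i j) * u j) = c * u i"
    using assms(3) unfolding is_eigenvalue_def by blast
  have "Max ((\<lambda>j. cmod (u j)) ` I) \<in> (\<lambda>j. cmod (u j)) ` I"
    using I \<open>\<exists>i\<in>I. u i \<noteq> 0\<close> by (intro Max_in) auto
  then obtain i where i: "i \<in> I" and "cmod (u i) = Max ((\<lambda>j. cmod (u j)) ` I)" by auto
  then have i_max: "cmod (u j) \<le> cmod (u i)" if "j \<in> I" for j
    using I that by simp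
  have "u i \<noteq> 0"
    using \<open>\<exists>i\<in>I. u i \<noteq> 0\<close> i_max by fastforce
  show ?thesis
  proof (intro bexI[OF _ i] allI)
    fix k
    have "cmod c ^ k * cmod (u i) = cmod (\<Sum>j\<in>I. complex_of_real (mat_pow_on I M k i j) * u j)"
      by (simp add: mat_pow_on_eigenvector[OF I u i] norm_mult norm_power)
    also have "\<dots> \<le> (\<Sum>j\<in>I. mat_pow_on I M k i j * cmod (u j))"
      using mat_pow_on_nonneg[OF nonneg i]
      by (auto intro!: order.trans[OF norm_sum] sum_mono simp: norm_mult)
    also have "\<dots> \<le> (\<Sum>j\<in>I. mat_pow_on I M k i j) * cmod (u i)"
      unfolding sum_distrib_right using mat_pow_on_nonneg[OF nonneg i] i_max
      by (intro sum_mono mult_left_mono) auto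
    finally show "cmod c ^ k \<le> (\<Sum>j\<in>I. mat_pow_on I M k i j)"
      using \<open>u i \<noteq> 0\<close> by simp
  qed
qed

section \<open>Subadditive sequences\<close>

lemma fekete_subadditive:
  fixes a :: "nat \<Rightarrow> real"
  assumes sub: "\<And>k l. a (k + l) \<le> a k + a l" and nonneg: "\<And>k. 0 \<le> a k"
  shows "(\<lambda>k. a k / real k) \<longlonglongrightarrow> Inf {a k / real k | k. 1 \<le> k}"
proof -
  define L where "L = Inf {a k / real k | k. 1 \<le> k}"
  have L_le: "L \<le> a k / real k" if "1 \<le> k" for k
    unfolding L_def using that nonneg by (intro cInf_lower) (auto intro: bdd_belowI[of _ 0])
  show ?thesis
    unfolding L_def[symmetric]
  proof (rule LIMSEQ_I)
    fix r :: real assume r: "0 < r"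
    have "L < L + r / 2" using r by simp
    then obtain m where m: "1 \<le> m" "a m / real m < L + r / 2"
      unfolding L_def by (subst (asm) cInf_less_iff) (auto intro: bdd_belowI[of _ 0] simp: nonneg)
    define C where "C = (\<Sum>j<m. a j)"
    have a_le_C: "a j \<le> C" if "j < m" for j
      unfolding C_def using that nonneg by (intro member_le_sum) auto
    have a_mult: "a (q * m + j) \<le> real q * a m + a j" for q j
    proof (induction q)
      case (Suc q)
      have "a (Suc q * m + j) \<le> a m + a (q * m + j)"
        using sub[of m "q * m + j"] by (simp add: add.assoc)
      then show ?case using Suc by (simp add: algebra_simps)
    qed simp
    obtain N :: nat where N: "2 * C / r < real N" using reals_Archimedean2 by blast
    have "\<bar>a n / real n - L\<bar> < r" if n: "Suc N \<le> n" for n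
    proof -
      have n_pos: "0 < real n" using n by simp
      have "a n \<le> real (n div m) * a m + C"
        using a_mult[of "n div m" "n mod m"] a_le_C[of "n mod m"] m(1) by simp
      also have "real (n div m) * a m = real (n div m * m) * (a m / real m)"
        using m(1) by simp
      also have "\<dots> \<le> real n * (a m / real m)"
        using nonneg[of m] div_times_less_eq_dividend[of n m]
        by (intro mult_right_mono) (simp_all only: of_nat_le_iff divide_nonneg_nonneg of_nat_0_le_iff)
      finally have "a n / real n \<le> a m / real m + C / real n"
        using n_pos by (simp add: field_simps)
      moreover have "C / real n < r / 2"
      proof -
        have "2 * C < r * real N" using N r by (simp add: field_simps)
        also have "\<dots> \<le> r * real n" using n r by (intro mult_left_mono) simp_all
        finally show ?thesis using n_pos by (simp add: field_simps)
      qed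
      moreover have "L \<le> a n / real n" using n by (intro L_le) simp
      ultimately show ?thesis using m(2) unfolding abs_less_iff by linarith
    qed
    then show "\<exists>N. \<forall>n\<ge>N. norm (a n / real n - L) < r" by auto
  qed
qed

section \<open>Walks in a finite graph and their maximal weights\<close>

lemma Pset_mono: "S \<subseteq> S' \<Longrightarrow> Pset S n \<alpha> t \<subseteq> Pset S' n \<alpha> t"
  unfolding Pset_def by auto

lemma Pset_subset:
  assumes "S \<subseteq> {\<alpha>. length \<alpha> = n \<and> set \<alpha> \<subseteq> V}" and "1 \<le> n"
  shows "Pset S n \<alpha> t \<subseteq> V"
  using assms unfolding Pset_def by (auto intro!: nth_mem[THEN subsetD[rotated]])

lemma finite_words: "finite A \<Longrightarrow> finite {\<alpha>. length \<alpha> = n \<and> set \<alpha> \<subseteq> A}"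
  using finite_lists_length_eq[of A n] by (simp add: conj_commute)

lemma words_nth_mem:
  "S \<subseteq> {\<alpha>. length \<alpha> = n \<and> set \<alpha> \<subseteq> A} \<Longrightarrow> \<alpha> \<in> S \<Longrightarrow> t < n \<Longrightarrow> \<alpha> ! t \<in> A"
  by (auto intro: nth_mem[THEN subsetD[rotated]])

locale successor_graph =
  fixes V :: "'a set" and D :: "'a \<Rightarrow> 'a set"
  assumes finite_V: "finite V" and V_nonempty: "V \<noteq> {}"
    and D_subset: "\<And>i. i \<in> V \<Longrightarrow> D i \<subseteq> V"
    and D_nonempty: "\<And>i. i \<in> V \<Longrightarrow> D i \<noteq> {}"
begin

lemma finite_D: "i \<in> V \<Longrightarrow> finite (D i)"
  using finite_subset[OF D_subset finite_V] .

lemma card_D_ge_1: "i \<in> V \<Longrightarrow> 1 \<le> card (D i)"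
  using finite_D D_nonempty by (simp add: Suc_le_eq card_gt_0_iff)

text \<open>\<^term>\<open>max_weight_from k i\<close> is the largest weight \<open>\<Prod>t<k. #D(\<alpha>\<^sub>t)\<close> of a walk
  \<open>\<alpha>\<^sub>0 = i, \<dots>, \<alpha>\<^sub>k\<close>; see \<open>walk_weight_le\<close> and \<open>walk_weight_attained\<close>.\<close>

primrec max_weight_from :: "nat \<Rightarrow> 'a \<Rightarrow> real" where
  "max_weight_from 0 i = 1"
| "max_weight_from (Suc k) i = real (card (D i)) * Max (max_weight_from k ` D i)"

definition max_weight :: "nat \<Rightarrow> real" where
  "max_weight k = Max (max_weight_from k ` V)"

lemma Max_max_weight_from_attained:
  assumes "i \<in> V"
  obtains j where "j \<in> D i" and "Max (max_weight_from k ` D i) = max_weight_from k j"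
  using Max_in[OF finite_imageI[OF finite_D[OF assms]]] D_nonempty[OF assms] by auto

lemma max_weight_from_le_Max:
  "i \<in> V \<Longrightarrow> j \<in> D i \<Longrightarrow> max_weight_from k j \<le> Max (max_weight_from k ` D i)"
  using finite_D by simp

lemma max_weight_from_ge_1: "i \<in> V \<Longrightarrow> 1 \<le> max_weight_from k i"
proof (induction k arbitrary: i)
  case (Suc k)
  obtain j where "j \<in> D i" and j_max: "Max (max_weight_from k ` D i) = max_weight_from k j"
    using Max_max_weight_from_attained[OF Suc.prems] .
  then have "1 \<le> Max (max_weight_from k ` D i)" using Suc.IH D_subset[OF Suc.prems] by auto
  then show ?case using card_D_ge_1[OF Suc.prems] by (simp add: mult_ge1_I)
qed simp

lemma max_weight_attained: "\<exists>i\<in>V. max_weight k = max_weight_from k i"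
  unfolding max_weight_def using Max_in[OF finite_imageI[OF finite_V]] V_nonempty by auto

lemma max_weight_from_le_max_weight: "i \<in> V \<Longrightarrow> max_weight_from k i \<le> max_weight k"
  unfolding max_weight_def using finite_V by simp

lemma max_weight_ge_1: "1 \<le> max_weight k"
  using max_weight_attained max_weight_from_ge_1 by metis

lemma max_weight_pos: "0 < max_weight k"
  using max_weight_ge_1[of k] by linarith

lemma log_max_weight_nonneg: "0 \<le> log 2 (max_weight k)"
  using max_weight_ge_1[of k] by simp

lemma max_weight_0: "max_weight 0 = 1"
proof -
  have "max_weight_from 0 ` V = {1}" using V_nonempty by auto
  then show ?thesis unfolding max_weight_def by simp
qed

lemma max_weight_from_add_le:
  "i \<in> V \<Longrightarrow> max_weight_from (k + l) i \<le> max_weight_from k i * max_weight l"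
proof (induction k arbitrary: i)
  case 0
  then show ?case by (simp add: max_weight_from_le_max_weight)
next
  case (Suc k)
  obtain j where j: "j \<in> D i" and j_max: "Max (max_weight_from (k + l) ` D i) = max_weight_from (k + l) j"
    using Max_max_weight_from_attained[OF Suc.prems] .
  have "max_weight_from (k + l) j \<le> max_weight_from k j * max_weight l"
    using Suc.IH j D_subset[OF Suc.prems] by blast
  also have "\<dots> \<le> Max (max_weight_from k ` D i) * max_weight l"
    using max_weight_from_le_Max[OF Suc.prems j] max_weight_ge_1[of l] by (simp add: mult_right_mono)
  finally show ?case using j_max by (simp add: mult_left_mono mult.assoc)
qed

lemma max_weight_add_le: "max_weight (k + l) \<le> max_weight k * max_weight l"
proof -
  obtain i where i: "i \<in> V" and "max_weight (k + l) = max_weight_from (k + l) i"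
    using max_weight_attained by blast
  then have "max_weight (k + l) \<le> max_weight_from k i * max_weight l"
    using max_weight_from_add_le by simp
  also have "\<dots> \<le> max_weight k * max_weight l"
    using max_weight_from_le_max_weight[OF i] max_weight_ge_1[of l] by (simp add: mult_right_mono)
  finally show ?thesis .
qed

lemma max_weight_mult_le_power: "max_weight (j * k) \<le> max_weight k ^ j"
proof (induction j)
  case (Suc j)
  have "max_weight (Suc j * k) \<le> max_weight k * max_weight (j * k)"
    using max_weight_add_le[of k "j * k"] by simp
  also have "\<dots> \<le> max_weight k * max_weight k ^ j"
    using Suc max_weight_ge_1[of k] by (simp add: mult_left_mono)
  finally show ?case by simp
qed (simp add: max_weight_0)

definition weight_exponent :: real where
  "weight_exponent = Inf {log 2 (max_weight k) / real k | k. 1 \<le> k}"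

lemma log_max_weight_tendsto: "(\<lambda>k. log 2 (max_weight k) / real k) \<longlonglongrightarrow> weight_exponent"
  unfolding weight_exponent_def
proof (rule fekete_subadditive)
  fix k l
  have "log 2 (max_weight (k + l)) \<le> log 2 (max_weight k * max_weight l)"
    using max_weight_add_le max_weight_pos by simp
  also have "\<dots> = log 2 (max_weight k) + log 2 (max_weight l)"
    using max_weight_pos[of k] max_weight_pos[of l] by (simp add: log_mult)
  finally show "log 2 (max_weight (k + l)) \<le> log 2 (max_weight k) + log 2 (max_weight l)" .
qed (rule log_max_weight_nonneg)

lemma weight_exponent_le: "1 \<le> k \<Longrightarrow> weight_exponent \<le> log 2 (max_weight k) / real k"
  unfolding weight_exponent_def using log_max_weight_nonneg
  by (intro cInf_lower) (auto intro!: bdd_belowI[of _ 0])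

definition walk :: "'a list \<Rightarrow> bool" where
  "walk \<alpha> \<longleftrightarrow> set \<alpha> \<subseteq> V \<and> (\<forall>t. Suc t < length \<alpha> \<longrightarrow> \<alpha> ! Suc t \<in> D (\<alpha> ! t))"

definition walks :: "nat \<Rightarrow> 'a list set" where
  "walks n = {\<alpha>. length \<alpha> = n \<and> walk \<alpha>}"

lemma walk_nth_mem: "walk \<alpha> \<Longrightarrow> t < length \<alpha> \<Longrightarrow> \<alpha> ! t \<in> V"
  unfolding walk_def by (auto intro: nth_mem[THEN subsetD[rotated]])

lemma walk_nth_Suc: "walk \<alpha> \<Longrightarrow> Suc t < length \<alpha> \<Longrightarrow> \<alpha> ! Suc t \<in> D (\<alpha> ! t)"
  unfolding walk_def by blast

lemma walk_Nil: "walk []"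
  by (simp add: walk_def)

lemma walk_Cons: "walk (a # \<beta>) \<longleftrightarrow> a \<in> V \<and> walk \<beta> \<and> (\<beta> \<noteq> [] \<longrightarrow> \<beta> ! 0 \<in> D a)"
  by (cases \<beta>) (auto simp: walk_def All_less_Suc2)

lemma walk_append:
  assumes "walk xs" and "walk ys" and "xs \<noteq> []" and "ys \<noteq> []" and "ys ! 0 \<in> D (last xs)"
  shows "walk (xs @ ys)"
  using assms by (induction xs rule: induct_list012) (auto simp: walk_Cons nth_append)

lemma walk_take: "walk \<alpha> \<Longrightarrow> walk (take m \<alpha>)"
  unfolding walk_def by (auto dest: in_set_takeD)

lemma walk_weight_le:
  "walk \<alpha> \<Longrightarrow> length \<alpha> = Suc k \<Longrightarrow> (\<Prod>t<k. real (card (D (\<alpha> ! t)))) \<le> max_weight_from k (\<alpha> ! 0)"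
proof (induction k arbitrary: \<alpha>)
  case (Suc k)
  then obtain a \<beta> where \<alpha>: "\<alpha> = a # \<beta>" and len: "length \<beta> = Suc k" by (cases \<alpha>) auto
  have walk: "a \<in> V" "walk \<beta>" "\<beta> ! 0 \<in> D a" using Suc.prems(1) len unfolding \<alpha> walk_Cons by auto
  have "(\<Prod>t<Suc k. real (card (D (\<alpha> ! t)))) = real (card (D a)) * (\<Prod>t<k. real (card (D (\<beta> ! t))))"
    unfolding prod.lessThan_Suc_shift \<alpha> by simp
  also have "\<dots> \<le> real (card (D a)) * Max (max_weight_from k ` D a)"
    using order.trans[OF Suc.IH[OF walk(2) len] max_weight_from_le_Max[OF walk(1,3)]]
    by (intro mult_left_mono) simp_all
  finally show ?case unfolding \<alpha> by simp
qed simp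

lemma walk_weight_attained:
  "i \<in> V \<Longrightarrow> \<exists>\<alpha>. walk \<alpha> \<and> length \<alpha> = Suc k \<and> \<alpha> ! 0 = i
     \<and> (\<Prod>t<k. real (card (D (\<alpha> ! t)))) = max_weight_from k i"
proof (induction k arbitrary: i)
  case 0
  then show ?case by (intro exI[of _ "[i]"]) (simp add: walk_Cons walk_Nil)
next
  case (Suc k)
  obtain j where j: "j \<in> D i" and j_max: "Max (max_weight_from k ` D i) = max_weight_from k j"
    using Max_max_weight_from_attained[OF Suc.prems] .
  obtain \<beta> where \<beta>: "walk \<beta>" "length \<beta> = Suc k" "\<beta> ! 0 = j"
    and weight: "(\<Prod>t<k. real (card (D (\<beta> ! t)))) = max_weight_from k j"
    using Suc.IH j D_subset[OF Suc.prems] by blast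
  show ?case
  proof (intro exI[of _ "i # \<beta>"] conjI)
    show "walk (i # \<beta>)" using \<beta> j Suc.prems by (simp add: walk_Cons)
    show "(\<Prod>t<Suc k. real (card (D ((i # \<beta>) ! t)))) = max_weight_from (Suc k) i"
      unfolding prod.lessThan_Suc_shift using weight j_max by simp
  qed (use \<beta> in auto)
qed

lemma walk_extend:
  assumes \<alpha>: "\<alpha> \<in> walks n" and t: "Suc t < n" and B: "B \<in> D (\<alpha> ! t)"
  shows "\<exists>\<beta>\<in>walks n. take (Suc t) \<beta> = take (Suc t) \<alpha> \<and> \<beta> ! Suc t = B"
proof -
  have len: "length \<alpha> = n" and "walk \<alpha>" using \<alpha> by (auto simp: walks_def)
  then have "\<alpha> ! t \<in> V" using t by (simp add: walk_nth_mem)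
  then have "B \<in> V" using B D_subset by blast
  then obtain \<gamma> where \<gamma>: "walk \<gamma>" "length \<gamma> = Suc (n - Suc (Suc t))" "\<gamma> ! 0 = B"
    using walk_weight_attained by blast
  define \<beta> where "\<beta> = take (Suc t) \<alpha> @ \<gamma>"
  have "take (Suc t) \<alpha> \<noteq> []" and "last (take (Suc t) \<alpha>) = \<alpha> ! t"
    using len t by (simp_all add: take_Suc_conv_app_nth)
  then have "walk \<beta>"
    unfolding \<beta>_def using walk_take[OF \<open>walk \<alpha>\<close>] \<gamma> B t
    by (intro walk_append) auto
  moreover have "length \<beta> = n" "take (Suc t) \<beta> = take (Suc t) \<alpha>" "\<beta> ! Suc t = B"
    using len t \<gamma>(2,3) by (simp_all add: \<beta>_def nth_append)
  ultimately show ?thesis unfolding walks_def by (intro bexI[of _ \<beta>]) simp_all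
qed

lemma heads_walks: "1 \<le> n \<Longrightarrow> {\<beta> ! 0 | \<beta>. \<beta> \<in> walks n} = V"
proof (intro equalityI subsetI)
  fix i assume "1 \<le> n" and "i \<in> V"
  then obtain \<alpha> where "walk \<alpha>" "length \<alpha> = Suc (n - 1)" "\<alpha> ! 0 = i"
    using walk_weight_attained by blast
  then have "\<alpha> \<in> walks n" and "i = \<alpha> ! 0" using \<open>1 \<le> n\<close> by (simp_all add: walks_def)
  then show "i \<in> {\<beta> ! 0 | \<beta>. \<beta> \<in> walks n}" by blast
qed (auto simp: walks_def intro: walk_nth_mem)

lemma Pset_walks:
  assumes \<alpha>: "\<alpha> \<in> walks n" and t: "Suc t < n"
  shows "Pset (walks n) n \<alpha> t = D (\<alpha> ! t)"
proof -
  have "Pset (walks n) n \<alpha> t = {\<beta> ! Suc t | \<beta>. \<beta> \<in> walks n \<and> take (Suc t) \<beta> = take (Suc t) \<alpha>}"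
    using t by (simp add: Pset_def less_diff_conv)
  also have "\<dots> = D (\<alpha> ! t)"
  proof (intro equalityI subsetI)
    fix B assume "B \<in> {\<beta> ! Suc t | \<beta>. \<beta> \<in> walks n \<and> take (Suc t) \<beta> = take (Suc t) \<alpha>}"
    then obtain \<beta> where "walk \<beta>" "length \<beta> = n" "take (Suc t) \<beta> = take (Suc t) \<alpha>" "B = \<beta> ! Suc t"
      by (auto simp: walks_def)
    moreover from this(3) have "\<beta> ! t = \<alpha> ! t" by (metis lessI nth_take)
    ultimately show "B \<in> D (\<alpha> ! t)" using t walk_nth_Suc by metis
  next
    fix B assume "B \<in> D (\<alpha> ! t)"
    then obtain \<beta> where "\<beta> \<in> walks n" "take (Suc t) \<beta> = take (Suc t) \<alpha>" "B = \<beta> ! Suc t"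
      using walk_extend[OF \<alpha> t] by metis
    then show "B \<in> {\<beta> ! Suc t | \<beta>. \<beta> \<in> walks n \<and> take (Suc t) \<beta> = take (Suc t) \<alpha>}"
      by blast
  qed
  finally show ?thesis .
qed

lemma Pset_walks_last: "1 \<le> n \<Longrightarrow> Pset (walks n) n \<alpha> (n - 1) = V"
  unfolding Pset_def using heads_walks by simp

lemma prod_card_Pset_walks:
  assumes \<alpha>: "\<alpha> \<in> walks n" and n: "1 \<le> n"
  shows "real (\<Prod>t<n. card (Pset (walks n) n \<alpha> t))
    = real (card V) * (\<Prod>t<n - 1. real (card (D (\<alpha> ! t))))"
proof -
  obtain m where m: "n = Suc m" using n by (cases n) auto
  have "(\<Prod>t<m. card (Pset (walks n) n \<alpha> t)) = (\<Prod>t<m. card (D (\<alpha> ! t)))"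
    using Pset_walks[OF \<alpha>] m by (intro prod.cong) auto
  then show ?thesis using Pset_walks_last[OF n] m by (simp add: mult.commute)
qed

lemma finite_walks: "finite (walks n)"
proof (rule finite_subset)
  show "walks n \<subseteq> {\<alpha>. length \<alpha> = n \<and> set \<alpha> \<subseteq> V}" by (auto simp: walks_def walk_def)
qed (rule finite_words[OF finite_V])

lemma Nval_walks:
  assumes n: "1 \<le> n"
  shows "real (Nval (walks n) n) = real (card V) * max_weight (n - 1)"
proof -
  define products where "products = {(\<Prod>t<n. card (Pset (walks n) n \<alpha> t)) | \<alpha>. \<alpha> \<in> walks n}"
  have fin: "finite products" unfolding products_def using finite_walks by simp
  have upper: "real v \<le> real (card V) * max_weight (n - 1)" if v_mem: "v \<in> products" for v
  proof -
    obtain \<alpha> where \<alpha>: "\<alpha> \<in> walks n" and v: "v = (\<Prod>t<n. card (Pset (walks n) n \<alpha> t))"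
      using v_mem unfolding products_def by blast
    have "walk \<alpha>" "length \<alpha> = Suc (n - 1)" "\<alpha> ! 0 \<in> V"
      using \<alpha> n by (auto simp: walks_def walk_nth_mem)
    then have "(\<Prod>t<n - 1. real (card (D (\<alpha> ! t)))) \<le> max_weight (n - 1)"
      using order.trans[OF walk_weight_le max_weight_from_le_max_weight] by blast
    then show ?thesis
      unfolding v prod_card_Pset_walks[OF \<alpha> n] by (intro mult_left_mono) simp_all
  qed
  obtain i where "i \<in> V" and i_max: "max_weight (n - 1) = max_weight_from (n - 1) i"
    using max_weight_attained by blast
  then obtain \<alpha> where \<alpha>: "walk \<alpha>" "length \<alpha> = Suc (n - 1)" "\<alpha> ! 0 = i"
    and weight: "(\<Prod>t<n - 1. real (card (D (\<alpha> ! t)))) = max_weight_from (n - 1) i"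
    using walk_weight_attained by blast
  have \<alpha>_walks: "\<alpha> \<in> walks n" using \<alpha> n by (simp add: walks_def)
  define p where "p = (\<Prod>t<n. card (Pset (walks n) n \<alpha> t))"
  have p_mem: "p \<in> products" unfolding p_def products_def using \<alpha>_walks by auto
  have p_eq: "real p = real (card V) * max_weight (n - 1)"
    unfolding p_def prod_card_Pset_walks[OF \<alpha>_walks n] weight i_max ..
  have "Max products = p"
  proof (rule Max_eqI[OF fin _ p_mem])
    fix y assume "y \<in> products"
    then have "real y \<le> real p" unfolding p_eq by (rule upper)
    then show "y \<le> p" by (simp only: of_nat_le_iff)
  qed
  then show ?thesis unfolding Nval_def products_def[symmetric] by (simp only: p_eq)
qed

lemma row_sum_pow_Suc_of_row_support:
  assumes i: "i \<in> V" and row: "\<And>j. j \<in> V \<Longrightarrow> M i j = (if j \<in> D i then w else 0)"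
  shows "(\<Sum>j\<in>V. mat_pow_on V M (Suc k) i j) = w * (\<Sum>l\<in>D i. \<Sum>j\<in>V. mat_pow_on V M k l j)"
proof -
  have "(\<Sum>j\<in>V. mat_pow_on V M (Suc k) i j) = (\<Sum>l\<in>V. M i l * (\<Sum>j\<in>V. mat_pow_on V M k l j))"
    by (rule row_sum_mat_pow_on_Suc[OF finite_V i])
  also have "\<dots> = (\<Sum>l\<in>V. if l \<in> D i then w * (\<Sum>j\<in>V. mat_pow_on V M k l j) else 0)"
    using row by (intro sum.cong) auto
  also have "\<dots> = w * (\<Sum>l\<in>D i. \<Sum>j\<in>V. mat_pow_on V M k l j)"
    using D_subset[OF i]
    by (simp add: sum.inter_restrict[OF finite_V, symmetric] Int_absorb1 sum_distrib_left)
  finally show ?thesis .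
qed

end

locale degree_weighted_graph = successor_graph V D for V :: "'a set" and D +
  fixes M W :: "'a \<Rightarrow> 'a \<Rightarrow> real"
  assumes M_eq: "\<And>i j. i \<in> V \<Longrightarrow> j \<in> V \<Longrightarrow> M i j = (if j \<in> D i then 1 else 0)"
    and W_eq: "\<And>i j. i \<in> V \<Longrightarrow> j \<in> V \<Longrightarrow> W i j = (if j \<in> D i then real (card (D i)) else 0)"
begin

lemma M_nonneg: "i \<in> V \<Longrightarrow> j \<in> V \<Longrightarrow> 0 \<le> M i j"
  by (simp add: M_eq)

lemma W_nonneg: "i \<in> V \<Longrightarrow> j \<in> V \<Longrightarrow> 0 \<le> W i j"
  by (simp add: W_eq)

lemma row_sum_M_pow_Suc:
  "i \<in> V \<Longrightarrow> (\<Sum>j\<in>V. mat_pow_on V M (Suc k) i j) = (\<Sum>l\<in>D i. \<Sum>j\<in>V. mat_pow_on V M k l j)"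
  using row_sum_pow_Suc_of_row_support[of i M 1] M_eq by simp

lemma row_sum_W_pow_Suc:
  "i \<in> V \<Longrightarrow> (\<Sum>j\<in>V. mat_pow_on V W (Suc k) i j)
     = real (card (D i)) * (\<Sum>l\<in>D i. \<Sum>j\<in>V. mat_pow_on V W k l j)"
  using row_sum_pow_Suc_of_row_support[of i W] W_eq by simp

lemma spectral_radius_M_ge_1: "1 \<le> spectral_radius V M"
proof (rule spectral_radius_ge_1[OF finite_V V_nonempty M_nonneg])
  fix i assume i: "i \<in> V"
  then obtain j where "j \<in> D i" using D_nonempty by blast
  then show "\<exists>j\<in>V. 1 \<le> M i j" using i D_subset M_eq by auto
qed

lemma spectral_radius_W_ge_1: "1 \<le> spectral_radius V W"
proof (rule spectral_radius_ge_1[OF finite_V V_nonempty W_nonneg])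
  fix i assume i: "i \<in> V"
  then obtain j where "j \<in> D i" using D_nonempty by blast
  then show "\<exists>j\<in>V. 1 \<le> W i j" using i D_subset W_eq card_D_ge_1 by auto
qed

lemma max_weight_from_le_row_sum_W:
  "i \<in> V \<Longrightarrow> max_weight_from k i \<le> (\<Sum>j\<in>V. mat_pow_on V W k i j)"
proof (induction k arbitrary: i)
  case (Suc k)
  obtain j where j: "j \<in> D i" and j_max: "Max (max_weight_from k ` D i) = max_weight_from k j"
    using Max_max_weight_from_attained[OF Suc.prems] .
  have "Max (max_weight_from k ` D i) \<le> (\<Sum>l\<in>D i. max_weight_from k l)"
    unfolding j_max using j finite_D[OF Suc.prems] D_subset[OF Suc.prems] max_weight_from_ge_1
    by (intro member_le_sum) (auto intro: order.trans[OF zero_le_one])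
  also have "\<dots> \<le> (\<Sum>l\<in>D i. \<Sum>j\<in>V. mat_pow_on V W k l j)"
    using Suc.IH D_subset[OF Suc.prems] by (intro sum_mono) auto
  finally show ?case
    unfolding row_sum_W_pow_Suc[OF Suc.prems] by (simp add: mult_left_mono)
qed (simp add: finite_V)

lemma row_sum_W_le:
  "i \<in> V \<Longrightarrow>
    (\<Sum>j\<in>V. mat_pow_on V W k i j) \<le> (\<Sum>j\<in>V. mat_pow_on V M k i j) * max_weight_from k i"
proof (induction k arbitrary: i)
  case (Suc k)
  have "(\<Sum>l\<in>D i. \<Sum>j\<in>V. mat_pow_on V W k l j)
      \<le> (\<Sum>l\<in>D i. (\<Sum>j\<in>V. mat_pow_on V M k l j) * max_weight_from k l)"
    using Suc.IH D_subset[OF Suc.prems] by (intro sum_mono) auto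
  also have "\<dots> \<le> (\<Sum>l\<in>D i. (\<Sum>j\<in>V. mat_pow_on V M k l j) * Max (max_weight_from k ` D i))"
    using max_weight_from_le_Max[OF Suc.prems] D_subset[OF Suc.prems]
      mat_pow_on_nonneg[of V M, OF M_nonneg]
    by (intro sum_mono mult_left_mono sum_nonneg) auto
  also have "\<dots> = (\<Sum>l\<in>D i. \<Sum>j\<in>V. mat_pow_on V M k l j) * Max (max_weight_from k ` D i)"
    by (rule sum_distrib_right[symmetric])
  finally have "real (card (D i)) * (\<Sum>l\<in>D i. \<Sum>j\<in>V. mat_pow_on V W k l j)
      \<le> real (card (D i)) * ((\<Sum>l\<in>D i. \<Sum>j\<in>V. mat_pow_on V M k l j) * Max (max_weight_from k ` D i))"
    by (rule mult_left_mono) simp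
  also have "\<dots> = (\<Sum>l\<in>D i. \<Sum>j\<in>V. mat_pow_on V M k l j) * (real (card (D i)) * Max (max_weight_from k ` D i))"
    by (rule mult.left_commute)
  finally show ?case
    by (simp only: row_sum_W_pow_Suc[OF Suc.prems] row_sum_M_pow_Suc[OF Suc.prems] max_weight_from.simps)
qed (simp add: finite_V)

lemma spectral_radius_W_pow_le_poly:
  obtains C m where "\<And>k. spectral_radius V W ^ k
    \<le> C * (real k + 1) ^ m * spectral_radius V M ^ k * max_weight k"
proof -
  obtain c where c: "is_eigenvalue V W c" "cmod c = spectral_radius V W"
    using spectral_radius_attained[OF finite_V V_nonempty] by blast
  obtain i where i: "i \<in> V" and lower: "\<And>k. spectral_radius V W ^ k \<le> (\<Sum>j\<in>V. mat_pow_on V W k i j)"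
    using eigenvalue_pow_le_row_sum[OF finite_V W_nonneg c(1)] c(2) by auto
  have "0 < spectral_radius V M" using spectral_radius_M_ge_1 by linarith
  then obtain C m where C: "\<And>k. (\<Sum>i\<in>V. \<Sum>j\<in>V. \<bar>mat_pow_on V M k i j\<bar>)
      \<le> C * (real k + 1) ^ m * spectral_radius V M ^ k"
    using entry_sum_mat_pow_on_le[OF finite_V _ eigenvalue_norm_le_spectral_radius[OF finite_V]] by blast
  have "spectral_radius V W ^ k \<le> C * (real k + 1) ^ m * spectral_radius V M ^ k * max_weight k" for k
  proof -
    have "spectral_radius V W ^ k \<le> (\<Sum>j\<in>V. mat_pow_on V M k i j) * max_weight_from k i"
      using order.trans[OF lower row_sum_W_le[OF i]] .
    also have "\<dots> \<le> (\<Sum>i\<in>V. \<Sum>j\<in>V. \<bar>mat_pow_on V M k i j\<bar>) * max_weight k"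
    proof (rule mult_mono)
      show "0 \<le> max_weight_from k i" using max_weight_from_ge_1[OF i, of k] by linarith
    qed (simp_all add: row_sum_le_entry_sum[OF finite_V i] max_weight_from_le_max_weight[OF i] sum_nonneg)
    also have "\<dots> \<le> C * (real k + 1) ^ m * spectral_radius V M ^ k * max_weight k"
      using C max_weight_pos[of k] by (intro mult_right_mono) (auto simp: less_imp_le)
    finally show ?thesis .
  qed
  then show ?thesis by (rule that)
qed

lemma spectral_radius_W_pow_le: "spectral_radius V W ^ k \<le> spectral_radius V M ^ k * max_weight k"
proof -
  obtain C m where bound: "\<And>k. spectral_radius V W ^ k
      \<le> C * (real k + 1) ^ m * spectral_radius V M ^ k * max_weight k"
    using spectral_radius_W_pow_le_poly by blast
  have "1 \<le> C" using bound[of 0] by (simp add: max_weight_0)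
  have rho_M: "1 \<le> spectral_radius V M" and rho_W: "1 \<le> spectral_radius V W"
    using spectral_radius_M_ge_1 spectral_radius_W_ge_1 .
  \<comment> \<open>applying the bound to all powers \<open>\<rho>(W)\<^sup>j\<^sup>k\<close> removes the polynomial factor\<close>
  show ?thesis
  proof (rule pow_le_poly_times_pow_imp_le[where C = "C * (real k + 1) ^ m" and m = m])
    show "0 < spectral_radius V W ^ k" using rho_W by simp
    show "0 < spectral_radius V M ^ k * max_weight k" using rho_M max_weight_pos by simp
    fix j
    have "real (j * k) + 1 \<le> (real k + 1) * (real j + 1)" by (simp add: algebra_simps)
    then have poly: "(real (j * k) + 1) ^ m \<le> (real k + 1) ^ m * (real j + 1) ^ m"
      by (simp add: power_mono flip: power_mult_distrib)
    have "(spectral_radius V W ^ k) ^ j = spectral_radius V W ^ (j * k)"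
      unfolding power_mult[symmetric] by (simp add: mult.commute)
    also have "\<dots> \<le> C * (real (j * k) + 1) ^ m * spectral_radius V M ^ (j * k) * max_weight (j * k)"
      by (rule bound)
    also have "\<dots> \<le> C * ((real k + 1) ^ m * (real j + 1) ^ m) * spectral_radius V M ^ (j * k)
        * max_weight k ^ j"
      using poly max_weight_mult_le_power[of j k] \<open>1 \<le> C\<close> rho_M max_weight_pos[of "j * k"]
      by (intro mult_mono) simp_all
    also have "\<dots> = C * (real k + 1) ^ m * (real j + 1) ^ m * (spectral_radius V M ^ k * max_weight k) ^ j"
      by (simp add: power_mult_distrib mult_ac flip: power_mult)
    finally show "(spectral_radius V W ^ k) ^ j
        \<le> C * (real k + 1) ^ m * (real j + 1) ^ m * (spectral_radius V M ^ k * max_weight k) ^ j" .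
  qed
qed

lemma log_spectral_radius_diff_le_weight_exponent:
  "log 2 (spectral_radius V W) - log 2 (spectral_radius V M) \<le> weight_exponent"
proof (rule LIMSEQ_le_const[OF log_max_weight_tendsto], intro exI allI impI)
  fix k :: nat assume k: "1 \<le> k"
  have rho_M: "0 < spectral_radius V M" and rho_W: "0 < spectral_radius V W"
    using spectral_radius_M_ge_1 spectral_radius_W_ge_1 by linarith+
  have "real k * log 2 (spectral_radius V W) = log 2 (spectral_radius V W ^ k)"
    using rho_W by (simp add: log_nat_power)
  also have "\<dots> \<le> log 2 (spectral_radius V M ^ k * max_weight k)"
    using spectral_radius_W_pow_le rho_M rho_W max_weight_pos by simp
  also have "\<dots> = real k * log 2 (spectral_radius V M) + log 2 (max_weight k)"
    using rho_M max_weight_pos[of k] by (simp add: log_mult log_nat_power)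
  finally show "log 2 (spectral_radius V W) - log 2 (spectral_radius V M) \<le> log 2 (max_weight k) / real k"
    using k by (simp add: field_simps)
qed

lemma weight_exponent_le_log_spectral_radius: "weight_exponent \<le> log 2 (spectral_radius V W)"
proof -
  have "2 powr weight_exponent \<le> spectral_radius V W"
  proof (rule le_spectral_radius_if_pow_le_entry_sum[OF finite_V V_nonempty])
    fix k
    have "(2 powr weight_exponent) ^ k \<le> max_weight k"
    proof (cases "k = 0")
      case False
      then have "real k * weight_exponent \<le> log 2 (max_weight k)"
        using weight_exponent_le[of k] by (simp add: field_simps)
      then have "2 powr (real k * weight_exponent) \<le> max_weight k"
        using max_weight_pos by (simp add: le_log_iff)
      then show ?thesis by (simp add: powr_powr mult.commute flip: powr_realpow)
    qed (simp add: max_weight_0)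
    also obtain i where "i \<in> V" and "max_weight k = max_weight_from k i"
      using max_weight_attained by blast
    then have "max_weight k \<le> (\<Sum>i\<in>V. \<Sum>j\<in>V. \<bar>mat_pow_on V W k i j\<bar>)"
      using max_weight_from_le_row_sum_W row_sum_le_entry_sum[OF finite_V] by (metis order.trans)
    finally show "(2 powr weight_exponent) ^ k \<le> (\<Sum>i\<in>V. \<Sum>j\<in>V. \<bar>mat_pow_on V W k i j\<bar>)" .
  qed simp
  then show ?thesis using spectral_radius_W_ge_1 by (simp add: le_log_iff)
qed

lemma weight_exponent_le_log_max_norm: "weight_exponent \<le> log 2 (max_norm V W)"
proof -
  obtain i where i: "i \<in> V" and i_max: "max_weight 1 = max_weight_from 1 i"
    using max_weight_attained by blast
  obtain j where j: "j \<in> D i" using D_nonempty[OF i] by blast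
  have "max_weight_from 0 ` D i = {1}" using j by auto
  moreover have "j \<in> V" using j D_subset[OF i] by blast
  ultimately have "max_weight 1 = \<bar>W i j\<bar>" using i_max i j by (simp add: W_eq)
  also have "\<dots> \<le> max_norm V W"
    unfolding max_norm_def using i j D_subset finite_V
    by (intro Max_ge) (auto simp: finite_image_set2)
  finally have "log 2 (max_weight 1) \<le> log 2 (max_norm V W)"
    using max_weight_pos[of 1] by (subst log_le_cancel_iff) auto
  moreover have "weight_exponent \<le> log 2 (max_weight 1)" using weight_exponent_le[of 1] by simp
  ultimately show ?thesis by linarith
qed

end

section \<open>Quasi-invariant partitions\<close>

locale quasi_invariant_partition_system =
  fixes F :: "'x \<Rightarrow> 'u \<Rightarrow> 'x set" and Q :: "'x set"
    and \<A> :: "'x set set" and G :: "'x set \<Rightarrow> 'u"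
  assumes F_nonempty: "\<And>x u. F x u \<noteq> {}"
    and Q_nonempty: "Q \<noteq> {}"
    and qip: "quasi_invariant_partition F Q \<A> G"
begin

lemma finite_cover: "finite \<A>"
  and cover_subset: "A \<in> \<A> \<Longrightarrow> A \<subseteq> Q"
  and covers: "Q \<subseteq> \<Union>\<A>"
  and invariant: "A \<in> \<A> \<Longrightarrow> Fset F A (G A) \<subseteq> Q"
  using qip by (auto simp: quasi_invariant_partition_def invariant_cover_def)

lemma private_point: "A \<in> \<A> \<Longrightarrow> A - \<Union>{B\<in>\<A>. B \<noteq> A} \<noteq> {}"
  using qip by (simp add: quasi_invariant_partition_def)

lemma private_image:
  "A \<in> \<A> \<Longrightarrow> B \<in> Dset F \<A> G A
    \<Longrightarrow> Fset F A (G A) \<inter> (B - \<Union>{C\<in>Dset F \<A> G A. C \<noteq> B}) \<noteq> {}"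
  using qip by (simp add: quasi_invariant_partition_def)

lemma mem_Dset_iff: "B \<in> Dset F \<A> G A \<longleftrightarrow> B \<in> \<A> \<and> Fset F A (G A) \<inter> B \<noteq> {}"
  by (simp add: Dset_def)

lemma Dset_nonempty:
  assumes A: "A \<in> \<A>"
  shows "Dset F \<A> G A \<noteq> {}"
proof -
  obtain x where "x \<in> A" using private_point[OF A] by blast
  moreover obtain y where "y \<in> F x (G A)" using F_nonempty by blast
  ultimately have y: "y \<in> Fset F A (G A)" by (auto simp: Fset_def)
  then obtain B where "B \<in> \<A>" and "y \<in> B" using invariant[OF A] covers by blast
  then have "B \<in> Dset F \<A> G A" using y by (auto simp: mem_Dset_iff)
  then show ?thesis by blast
qed

lemma cover_nonempty: "\<A> \<noteq> {}"
  using Q_nonempty covers by blast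

sublocale degree_weighted_graph \<A> "Dset F \<A> G" "adj_matrix F G" "wadj_matrix F \<A> G"
  by unfold_locales
    (auto simp: finite_cover cover_nonempty Dset_nonempty mem_Dset_iff adj_matrix_def wadj_matrix_def)

lemma walks_spanning: "1 \<le> n \<Longrightarrow> spanning F Q \<A> G n (walks n)"
  unfolding spanning_def
proof (intro conjI ballI allI impI)
  assume n: "1 \<le> n"
  show "walks n \<subseteq> {\<alpha>. length \<alpha> = n \<and> set \<alpha> \<subseteq> \<A>}" by (auto simp: walks_def walk_def)
  show "Q \<subseteq> \<Union>{\<beta> ! 0 | \<beta>. \<beta> \<in> walks n}" unfolding heads_walks[OF n] by (rule covers)
  fix \<alpha> t assume \<alpha>: "\<alpha> \<in> walks n" and t: "t < n - 1"
  show "Fset F (\<alpha> ! t) (G (\<alpha> ! t)) \<subseteq> \<Union>(Pset (walks n) n \<alpha> t)"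
  proof
    fix y assume y: "y \<in> Fset F (\<alpha> ! t) (G (\<alpha> ! t))"
    have "\<alpha> ! t \<in> \<A>" using \<alpha> t by (auto simp: walks_def intro: walk_nth_mem)
    then obtain B where "B \<in> \<A>" "y \<in> B" using y invariant covers by blast
    then have "B \<in> Pset (walks n) n \<alpha> t"
      using Pset_walks[OF \<alpha>] t y by (auto simp: mem_Dset_iff)
    then show "y \<in> \<Union>(Pset (walks n) n \<alpha> t)" using \<open>y \<in> B\<close> by blast
  qed
qed

lemma spanning_heads:
  assumes S: "spanning F Q \<A> G n S" and n: "1 \<le> n" and A: "A \<in> \<A>"
  shows "\<exists>\<beta>\<in>S. \<beta> ! 0 = A"
proof -
  obtain x where x: "x \<in> A" "x \<notin> \<Union>{B\<in>\<A>. B \<noteq> A}" using private_point[OF A] by blast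
  then have "x \<in> Q" using cover_subset[OF A] by blast
  then obtain \<beta> where \<beta>: "\<beta> \<in> S" "x \<in> \<beta> ! 0" using S unfolding spanning_def by blast
  have "\<beta> ! 0 \<in> \<A>" using S n words_nth_mem[OF _ \<beta>(1)] unfolding spanning_def by auto
  then have "\<beta> ! 0 = A" using x \<beta>(2) by blast
  then show ?thesis using \<beta>(1) by blast
qed

lemma Dset_subset_Pset:
  assumes S: "spanning F Q \<A> G n S" and \<alpha>: "\<alpha> \<in> S" and t: "t < n - 1"
  shows "Dset F \<A> G (\<alpha> ! t) \<subseteq> Pset S n \<alpha> t"
proof
  fix B assume B: "B \<in> Dset F \<A> G (\<alpha> ! t)"
  have S_words: "S \<subseteq> {\<alpha>. length \<alpha> = n \<and> set \<alpha> \<subseteq> \<A>}" using S unfolding spanning_def by blast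
  then have "\<alpha> ! t \<in> \<A>" using \<alpha> t by (simp add: words_nth_mem)
  then obtain y where y: "y \<in> Fset F (\<alpha> ! t) (G (\<alpha> ! t))" "y \<in> B"
    and y_private: "y \<notin> \<Union>{C\<in>Dset F \<A> G (\<alpha> ! t). C \<noteq> B}"
    using private_image[OF _ B] by blast
  have "y \<in> \<Union>(Pset S n \<alpha> t)" using S \<alpha> t y(1) unfolding spanning_def by blast
  then obtain C where C: "C \<in> Pset S n \<alpha> t" "y \<in> C" by blast
  moreover have "C \<in> \<A>" using Pset_subset[OF S_words] C(1) t by fastforce
  ultimately have "C = B" using y(1) y_private by (auto simp: mem_Dset_iff)
  then show "B \<in> Pset S n \<alpha> t" using C(1) by simp
qed

lemma walks_subset_spanning:
  assumes S: "spanning F Q \<A> G n S" and n: "1 \<le> n"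
  shows "walks n \<subseteq> S"
proof
  fix \<alpha> assume "\<alpha> \<in> walks n"
  then have len: "length \<alpha> = n" and "walk \<alpha>" by (simp_all add: walks_def)
  have S_len: "length \<beta> = n" if "\<beta> \<in> S" for \<beta> using S that unfolding spanning_def by blast
  have prefix: "\<exists>\<beta>\<in>S. take (Suc t) \<beta> = take (Suc t) \<alpha>" if "t < n" for t
    using that
  proof (induction t)
    case 0
    have "\<alpha> ! 0 \<in> \<A>" using walk_nth_mem[OF \<open>walk \<alpha>\<close>] len n by simp
    then obtain \<beta> where "\<beta> \<in> S" "\<beta> ! 0 = \<alpha> ! 0" using spanning_heads[OF S n] by blast
    then show ?case using S_len len n by (auto simp: take_Suc_conv_app_nth)
  next
    case (Suc t)
    then obtain \<beta> where \<beta>: "\<beta> \<in> S" "take (Suc t) \<beta> = take (Suc t) \<alpha>" by auto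
    then have "\<beta> ! t = \<alpha> ! t" by (metis lessI nth_take)
    then have "\<alpha> ! Suc t \<in> Dset F \<A> G (\<beta> ! t)"
      using walk_nth_Suc[OF \<open>walk \<alpha>\<close>] len Suc.prems by simp
    moreover have "t < n - 1" using Suc.prems by simp
    ultimately have "\<alpha> ! Suc t \<in> Pset S n \<beta> t" using Dset_subset_Pset[OF S \<beta>(1)] by blast
    then obtain \<gamma> where \<gamma>: "\<gamma> \<in> S" "take (Suc t) \<gamma> = take (Suc t) \<beta>" "\<alpha> ! Suc t = \<gamma> ! Suc t"
      unfolding Pset_def using Suc.prems by (auto split: if_splits)
    have "take (Suc (Suc t)) \<gamma> = take (Suc t) \<gamma> @ [\<gamma> ! Suc t]"
      using S_len[OF \<gamma>(1)] Suc.prems by (simp add: take_Suc_conv_app_nth)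
    also have "\<dots> = take (Suc (Suc t)) \<alpha>"
      using \<gamma>(2,3) \<beta>(2) len Suc.prems by (simp add: take_Suc_conv_app_nth)
    finally show ?case using \<gamma>(1) by blast
  qed
  obtain \<beta> where "\<beta> \<in> S" "take n \<beta> = take n \<alpha>" using prefix[of "n - 1"] n by auto
  then show "\<alpha> \<in> S" using S_len len by auto
qed

lemma Nval_walks_le:
  assumes S: "spanning F Q \<A> G n S" and n: "1 \<le> n"
  shows "Nval (walks n) n \<le> Nval S n"
proof -
  have S_words: "S \<subseteq> {\<alpha>. length \<alpha> = n \<and> set \<alpha> \<subseteq> \<A>}" using S unfolding spanning_def by blast
  have walks_S: "walks n \<subseteq> S" by (rule walks_subset_spanning[OF S n])
  have "finite S" using S_words finite_words[OF finite_cover] by (rule finite_subset)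
  have "walks n \<noteq> {}" using heads_walks[OF n] V_nonempty by auto
  then have "Nval (walks n) n \<in> {(\<Prod>t<n. card (Pset (walks n) n \<alpha> t)) | \<alpha>. \<alpha> \<in> walks n}"
    unfolding Nval_def using finite_walks by (intro Max_in) auto
  then obtain \<alpha> where \<alpha>: "\<alpha> \<in> walks n"
    and Nval_eq: "Nval (walks n) n = (\<Prod>t<n. card (Pset (walks n) n \<alpha> t))" by blast
  note Nval_eq
  also have "\<dots> \<le> (\<Prod>t<n. card (Pset S n \<alpha> t))"
    using finite_subset[OF Pset_subset[OF S_words n] finite_cover] Pset_mono[OF walks_S]
    by (intro prod_mono conjI card_mono) simp_all
  also have "\<dots> \<le> Nval S n"
    unfolding Nval_def using \<alpha> walks_S \<open>finite S\<close> by (intro Max_ge) auto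
  finally show ?thesis .
qed

lemma r_inv_eq:
  assumes n: "1 \<le> n"
  shows "real (r_inv F Q \<A> G n) = real (card \<A>) * max_weight (n - 1)"
proof -
  define K where "K = {Nval S n | S. spanning F Q \<A> G n S}"
  have "K \<subseteq> (\<lambda>S. Nval S n) ` Pow {\<alpha>. length \<alpha> = n \<and> set \<alpha> \<subseteq> \<A>}"
    unfolding K_def spanning_def by auto
  then have "finite K" using finite_words[OF finite_cover] by (auto intro: finite_subset)
  then have "Min K = Nval (walks n) n"
    using Nval_walks_le n walks_spanning[OF n] unfolding K_def by (intro Min_eqI) auto
  then show ?thesis unfolding r_inv_def K_def[symmetric] using Nval_walks[OF n] by simp
qed

lemma h_inv_seq_tendsto: "h_inv_seq F Q \<A> G \<longlonglongrightarrow> weight_exponent"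
proof (rule LIMSEQ_imp_Suc)
  define c where "c = log 2 (real (card \<A>))"
  have "card \<A> > 0" using finite_cover V_nonempty by (simp add: card_gt_0_iff)
  then have seq_Suc: "h_inv_seq F Q \<A> G (Suc k)
      = log 2 (max_weight k) / real k * (real k / (real k + 1)) + c / (real k + 1)" for k
    using r_inv_eq[of "Suc k"] max_weight_pos[of k] max_weight_0
    by (cases "k = 0") (simp_all add: h_inv_seq_def c_def log_mult add_divide_distrib ac_simps)
  have "(\<lambda>k. log 2 (max_weight k) / real k * (real k / (real k + 1)) + c / (real k + 1))
      \<longlonglongrightarrow> weight_exponent * 1 + 0"
    by (intro tendsto_add tendsto_mult log_max_weight_tendsto) real_asymp+
  then show "(\<lambda>k. h_inv_seq F Q \<A> G (Suc k)) \<longlonglongrightarrow> weight_exponent"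
    unfolding seq_Suc by simp
qed

lemma h_inv_eq_weight_exponent: "h_inv F Q \<A> G = weight_exponent"
  unfolding h_inv_def using h_inv_seq_tendsto by (rule limI)

end

theorem theorem3p6:
  fixes F :: "'x \<Rightarrow> 'u \<Rightarrow> 'x set" and Q :: "'x set"
    and \<A> :: "'x set set" and G :: "'x set \<Rightarrow> 'u"
  assumes F_ne: "\<And>x u. F x u \<noteq> {}"
    and Q_ne: "Q \<noteq> {}"
    and qip: "quasi_invariant_partition F Q \<A> G"
  shows "convergent (h_inv_seq F Q \<A> G)
    \<and> log 2 (spectral_radius \<A> (wadj_matrix F \<A> G)) - log 2 (spectral_radius \<A> (adj_matrix F G))
        \<le> h_inv F Q \<A> G
    \<and> h_inv F Q \<A> G \<le> min (log 2 (max_norm \<A> (wadj_matrix F \<A> G)))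
                             (log 2 (spectral_radius \<A> (wadj_matrix F \<A> G)))
    \<and> (spectral_radius \<A> (adj_matrix F G) = 1 \<longrightarrow>
        h_inv F Q \<A> G = log 2 (spectral_radius \<A> (wadj_matrix F \<A> G)))"
proof -
  interpret quasi_invariant_partition_system F Q \<A> G
    using assms by unfold_locales
  show ?thesis
    unfolding h_inv_eq_weight_exponent
    using convergentI[OF h_inv_seq_tendsto] log_spectral_radius_diff_le_weight_exponent
      weight_exponent_le_log_spectral_radius weight_exponent_le_log_max_norm
    by auto
qed

end
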